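(* Let $\alpha\in(0,1]$, $\gamma\in(0,1)$, and let $\delta>1$, $k\ge1$ and $c\ge\frac{4+2\delta}{3(\delta-1)^2}\log\frac{k}{\alpha}$ be constants. If $W\le c\tau$, then Algorithm 1 (with parameters $\gamma,c$ and subroutine $\textsf{ALG}_{\textsf{RoE}}$) satisfies $$\mathbf{E}\left[\frac{a(\boldsymbol{w})}{f(\boldsymbol{w})}\right]\ge\frac{\gamma\log(1/\gamma)}{c+1}.$$
   Context: Setting: $E$ is a finite ground set, $\mathcal{F}\subseteq2^E$ is downward-closed, each $e\in E$ has a nonnegative weight $w_e\sim D_e$ independently, with the $D_e$ having no point masses. Elements arrive online in a fixed order with their weights; an online algorithm decides immediately and irrevocably whether to accept each element, keeping the accepted set in $\mathcal{F}$. $f(\boldsymbol{w})=\max_{S\in\mathcal{F}}\sum_{e\in S}w_e$. Let $\tau$ be such that $\Pr[\max_{e\in E}w_e\le\tau]=\gamma$, let $\mathcal{E}_0$ be the event $\{w_e\le\tau\ \forall e\in E\}$, and $W=\mathbf{E}[f(\boldsymbol{w})\mid\mathcal{E}_0]$. $\textsf{ALG}_{\textsf{RoE}}$ is an online algorithm satisfying $\mathbf{E}[\text{value of }\textsf{ALG}_{\textsf{RoE}}\mid\mathcal{E}_0]\ge\alpha\,\mathbf{E}[f(\boldsymbol{w})\mid\mathcal{E}_0]$. Algorithm 1: if $W\le c\tau$, it accepts only the first arriving element $e^*$ with $w_{e^*}\ge\tau$ (and nothing if none exists); otherwise, it runs $\textsf{ALG}_{\textsf{RoE}}$ as long as all arrived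 weights are at most $\tau$, and as soon as an element with weight exceeding $\tau$ arrives, it rejects it and all remaining elements. $a(\boldsymbol{w})$ is the total weight of the set selected by Algorithm 1; $\log$ is the natural logarithm. *)

theory Defs
  imports "HOL-Probability.Probability"
begin

text \<open>Ground set E = {..<n}; elements arrive in the order 0, 1, ..., n-1.
  A weight vector is a function w :: nat => real (only values on {..<n} matter).\<close>

definition downward_closed :: "nat set set \<Rightarrow> bool" where
  "downward_closed F \<longleftrightarrow> (\<forall>S\<in>F. \<forall>T. T \<subseteq> S \<longrightarrow> T \<in> F)"

definition opt_val :: "nat set set \<Rightarrow> (nat \<Rightarrow> real) \<Rightarrow> real" where
  "opt_val F w = Max ((\<lambda>S. \<Sum>e\<in>S. w e) ` F)"

definition weight_measure :: "nat \<Rightarrow> (nat \<Rightarrow> real measure) \<Rightarrow> (nat \<Rightarrow> real) measure" where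
  "weight_measure n D = PiM {..<n} D"

definition event0 :: "nat \<Rightarrow> (nat \<Rightarrow> real measure) \<Rightarrow> real \<Rightarrow> (nat \<Rightarrow> real) set" where
  "event0 n D \<tau> = {w \<in> space (weight_measure n D). \<forall>e<n. w e \<le> \<tau>}"

definition cond_opt :: "nat \<Rightarrow> nat set set \<Rightarrow> (nat \<Rightarrow> real measure) \<Rightarrow> real \<Rightarrow> real" where
  "cond_opt n F D \<tau> =
     (\<integral>w\<in>event0 n D \<tau>. opt_val F w \<partial>weight_measure n D)
       / measure (weight_measure n D) (event0 n D \<tau>)"

text \<open>Value of Algorithm 1.  The subroutine ALG_RoE is given by its (online) acceptance
  rule roe :: nat => (nat => real) => bool (roe e w: does ALG_RoE accept element e on
  input w).\<close>
definition alg1_value ::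
  "nat \<Rightarrow> real \<Rightarrow> real \<Rightarrow> real \<Rightarrow> (nat \<Rightarrow> (nat \<Rightarrow> real) \<Rightarrow> bool) \<Rightarrow> (nat \<Rightarrow> real) \<Rightarrow> real" where
  "alg1_value n c \<tau> W roe w =
     (if W \<le> c * \<tau> then
        (if \<exists>e<n. w e \<ge> \<tau> then w (LEAST e. e < n \<and> w e \<ge> \<tau>) else 0)
      else
        (\<Sum>e\<in>{e. e < n \<and> roe e w \<and> (\<forall>j\<le>e. w j \<le> \<tau>)}. w e))"

end

theory Submission
  imports Defs
begin

text \<open>Write \<open>q\<^sub>e = Pr[w\<^sub>e \<le> \<tau>]\<close>, so that \<open>\<gamma> = \<Prod>\<^sub>e q\<^sub>e\<close>.  Only the disjoint events "\<open>e\<close> is the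
  unique weight above \<open>\<tau>\<close>" are used: there the algorithm earns \<open>w\<^sub>e\<close> while
  \<open>f(w) \<le> w\<^sub>e + f(w[e := 0])\<close>, so \<open>a/f \<ge> \<tau> / (\<tau> + f(w[e := 0]))\<close>.  This lower bound does not depend
  on \<open>w\<^sub>e\<close>, so independence splits off the factor \<open>1 - q\<^sub>e\<close>.  Since \<open>f(w[e := 0]) \<le> f(w)\<close>, the mean of
  \<open>f(w[e := 0])\<close> on the event that all other weights are below \<open>\<tau>\<close> is at most \<open>W \<le> c\<tau>\<close>, and
  Jensen's inequality for the convex map \<open>x \<mapsto> \<tau>/(\<tau>+x)\<close> bounds the contribution of \<open>e\<close> from below
  by \<open>(1 - q\<^sub>e) \<gamma> / (q\<^sub>e (1 + c))\<close>.  Summing over \<open>e\<close> and using \<open>ln (1/q) \<le> (1 - q)/q\<close> gives the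
  bound.\<close>

lemma (in product_prob_space) integral_indicator_component_mult:
  fixes h :: "('i \<Rightarrow> 'a) \<Rightarrow> real"
  assumes J: "finite J" "i \<in> J" and A: "A \<in> sets (M i)"
    and h: "integrable (PiM J M) h" and h_indep: "\<And>x y. h (x(i := y)) = h x"
  shows "(\<integral>x. indicator A (x i) * h x \<partial>PiM J M) = measure (M i) A * (\<integral>x. h x \<partial>PiM J M)"
proof -
  have fin: "finite (J - {i})" "i \<notin> J - {i}" using J by auto
  note integral_insert = product_integral_insert[OF fin, unfolded insert_Diff[OF J(2)]]
  have "integrable (PiM J M) (\<lambda>x. indicator A (x i) * h x)"
  proof (rule Bochner_Integration.integrable_bound[OF h])
    show "(\<lambda>x. indicator A (x i) * h x) \<in> borel_measurable (PiM J M)"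
      using borel_measurable_integrable[OF h] measurable_component_singleton[OF J(2)] A
      by (intro borel_measurable_times measurable_compose[OF _ borel_measurable_indicator]) auto
  qed (auto simp: indicator_def)
  then have "(\<integral>x. indicator A (x i) * h x \<partial>PiM J M)
      = (\<integral>x. (\<integral>y. indicator A y * h x \<partial>M i) \<partial>PiM (J - {i}) M)"
    by (simp add: integral_insert h_indep)
  also have "\<dots> = measure (M i) A * (\<integral>x. h x \<partial>PiM J M)"
    using A h by (simp add: integral_insert h_indep prob_space.prob_space[OF prob_space])
  finally show ?thesis .
qed

lemma tangent_below_inverse_shift:
  fixes t x m :: real
  assumes "0 < t" "0 < t + x" "0 < t + m"
  shows "t / (t + m) - t / (t + m)^2 * (x - m) \<le> t / (t + x)"
proof -
  have "(t + m)^2 - (t + 2 * m - x) * (t + x) = (x - m)^2"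
    by (simp add: power2_eq_square algebra_simps)
  then have "t * ((t + 2 * m - x) * (t + x)) \<le> t * (t + m)^2"
    using assms(1) by (intro mult_left_mono) (auto simp: algebra_simps)
  then have "t * (t + 2 * m - x) / (t + m)^2 \<le> t / (t + x)"
    using assms by (simp add: divide_simps)
  moreover have "t / (t + m) - t / (t + m)^2 * (x - m) = t * (t + 2 * m - x) / (t + m)^2"
    using assms(3) by (simp add: divide_simps power2_eq_square) (simp add: algebra_simps)
  ultimately show ?thesis by simp
qed

text \<open>Jensen's inequality for the convex map \<open>x \<mapsto> t / (t + x)\<close> on an event, via its tangent at \<open>m\<close>.\<close>

lemma (in prob_space) prob_mult_inverse_shift_le_integral:
  fixes X :: "'a \<Rightarrow> real"
  assumes B: "B \<in> events" and X: "X \<in> borel_measurable M" "\<And>x. 0 \<le> X x"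
    and BX_int: "integrable M (\<lambda>x. indicator B x * X x)"
    and BX_le: "(\<integral>x. indicator B x * X x \<partial>M) \<le> m * prob B"
    and t: "0 < t" and m: "0 \<le> m"
  shows "prob B * (t / (t + m)) \<le> (\<integral>x. indicator B x * (t / (t + X x)) \<partial>M)"
proof -
  define \<kappa> where "\<kappa> = t / (t + m)^2"
  have \<kappa>: "0 \<le> \<kappa>" using t m by (simp add: \<kappa>_def)
  have B_int: "integrable M (indicator B :: 'a \<Rightarrow> real)"
    using B by (simp add: integrable_real_indicator less_top[symmetric])
  have "prob B * (t / (t + m)) \<le> (t / (t + m) + \<kappa> * m) * prob B - \<kappa> * (\<integral>x. indicator B x * X x \<partial>M)"
    using mult_left_mono[OF BX_le \<kappa>] by (simp add: algebra_simps)
  also have "\<dots> = (\<integral>x. (t / (t + m) + \<kappa> * m) * indicator B x - \<kappa> * (indicator B x * X x) \<partial>M)"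
    using B B_int BX_int by (simp add: Int_absorb2)
  also have "\<dots> \<le> (\<integral>x. indicator B x * (t / (t + X x)) \<partial>M)"
  proof (rule integral_mono)
    show "integrable M (\<lambda>x. (t / (t + m) + \<kappa> * m) * indicator B x - \<kappa> * (indicator B x * X x))"
      using B_int BX_int by simp
    show "integrable M (\<lambda>x. indicator B x * (t / (t + X x)))"
    proof (rule integrable_const_bound[where B=1])
      show "AE x in M. norm (indicator B x * (t / (t + X x))) \<le> 1"
      proof (intro AE_I2)
        fix x show "norm (indicator B x * (t / (t + X x))) \<le> 1"
          using t X(2)[of x] by (simp add: indicator_def)
      qed
      show "(\<lambda>x. indicator B x * (t / (t + X x))) \<in> borel_measurable M"
        using B X(1) by measurable
    qed
    fix x
    show "(t / (t + m) + \<kappa> * m) * indicator B x - \<kappa> * (indicator B x * X x) \<le> indicator B x * (t / (t + X x))"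
      using tangent_below_inverse_shift[of t "X x" m, folded \<kappa>_def] t m X(2)[of x]
      by (auto simp: indicator_def algebra_simps)
  qed
  finally show ?thesis .
qed

lemma ln_inverse_prod_le_sum:
  fixes q :: "'a \<Rightarrow> real"
  assumes "finite A" "\<And>i. i \<in> A \<Longrightarrow> 0 < q i"
  shows "ln (1 / prod q A) \<le> (\<Sum>i\<in>A. (1 - q i) / q i)"
proof -
  have "ln (1 / prod q A) = ln (\<Prod>i\<in>A. 1 / q i)"
    by (simp add: prod_dividef)
  also have "\<dots> = (\<Sum>i\<in>A. ln (1 / q i))"
    using assms by (intro ln_prod) (auto simp: less_imp_neq[symmetric])
  also have "\<dots> \<le> (\<Sum>i\<in>A. (1 - q i) / q i)"
  proof (rule sum_mono)
    fix i assume i: "i \<in> A"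
    have "ln (1 / q i) \<le> 1 / q i - 1" using assms(2)[OF i] by (intro ln_le_minus_one) simp
    also have "\<dots> = (1 - q i) / q i" using assms(2)[OF i] by (simp add: field_simps)
    finally show "ln (1 / q i) \<le> (1 - q i) / q i" .
  qed
  finally show ?thesis .
qed

lemma prod_pos_imp_factor_pos:
  fixes f :: "'a \<Rightarrow> real"
  assumes "finite A" "\<And>i. i \<in> A \<Longrightarrow> 0 \<le> f i" "0 < prod f A" "i \<in> A"
  shows "0 < f i"
proof -
  have "f i \<noteq> 0"
  proof
    assume "f i = 0"
    then have "prod f A = 0" using assms(1,4) by (intro prod_zero) auto
    with assms(3) show False by linarith
  qed
  then show ?thesis using assms(2)[OF assms(4)] by simp
qed

lemma opt_val_ge: "finite F \<Longrightarrow> S \<in> F \<Longrightarrow> (\<Sum>e\<in>S. w e) \<le> opt_val F w"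
  unfolding opt_val_def by (intro Max_ge) auto

lemma opt_val_nonneg: "finite F \<Longrightarrow> {} \<in> F \<Longrightarrow> 0 \<le> opt_val F w"
  using opt_val_ge[of F "{}" w] by simp

lemma opt_val_le_iff:
  "finite F \<Longrightarrow> F \<noteq> {} \<Longrightarrow> opt_val F w \<le> a \<longleftrightarrow> (\<forall>S\<in>F. (\<Sum>e\<in>S. w e) \<le> a)"
  unfolding opt_val_def by simp

lemma opt_val_le_of_bounded:
  assumes "F \<subseteq> Pow {..<n}" "F \<noteq> {}" "\<And>j. j < n \<Longrightarrow> w j \<le> b" "0 \<le> b"
  shows "opt_val F w \<le> n * b"
proof -
  have "(\<Sum>e\<in>S. w e) \<le> n * b" if "S \<subseteq> {..<n}" for S
  proof -
    have "(\<Sum>e\<in>S. w e) \<le> card S * b"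
      using that assms(3) sum_bounded_above[of S w b] by (auto simp: subset_eq)
    also have "\<dots> \<le> n * b"
      using card_mono[OF _ that] assms(4) by (intro mult_right_mono) auto
    finally show ?thesis .
  qed
  then show ?thesis
    using assms(1,2) finite_subset[OF assms(1)] by (subst opt_val_le_iff) auto
qed

lemma downward_closed_Diff: "downward_closed F \<Longrightarrow> S \<in> F \<Longrightarrow> S - T \<in> F"
  unfolding downward_closed_def by (meson Diff_subset)

lemma sum_fun_upd_zero: "finite S \<Longrightarrow> (\<Sum>x\<in>S. (w(e := 0)) x) = (\<Sum>x\<in>S - {e}. w x)"
  by (induction S rule: finite_induct) (auto simp: insert_Diff_if)

lemma opt_val_fun_upd_zero_le:
  assumes "finite F" "F \<noteq> {}" "downward_closed F" "\<forall>S\<in>F. finite S"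
  shows "opt_val F (w(e := 0)) \<le> opt_val F w"
proof (subst opt_val_le_iff[OF assms(1,2)], intro ballI)
  fix S assume S: "S \<in> F"
  have "S - {e} \<in> F" using downward_closed_Diff[OF assms(3) S] .
  moreover have "(\<Sum>x\<in>S. (w(e := 0)) x) = (\<Sum>x\<in>S - {e}. w x)"
    using assms(4) S by (intro sum_fun_upd_zero) blast
  ultimately show "(\<Sum>x\<in>S. (w(e := 0)) x) \<le> opt_val F w"
    using opt_val_ge[OF assms(1)] by simp
qed

lemma opt_val_le_add_fun_upd_zero:
  assumes "finite F" "F \<noteq> {}" "downward_closed F" "\<forall>S\<in>F. finite S" "0 \<le> w e"
  shows "opt_val F w \<le> w e + opt_val F (w(e := 0))"
proof (subst opt_val_le_iff[OF assms(1,2)], intro ballI)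
  fix S assume S: "S \<in> F"
  have "S - {e} \<in> F" using downward_closed_Diff[OF assms(3) S] .
  then have "(\<Sum>x\<in>S - {e}. w x) \<le> opt_val F (w(e := 0))"
    using opt_val_ge[OF assms(1), of "S - {e}" "w(e := 0)"] by simp
  moreover have "(\<Sum>x\<in>S. w x) \<le> w e + (\<Sum>x\<in>S - {e}. w x)"
    using assms(4,5) S by (cases "e \<in> S") (auto simp: sum.remove)
  ultimately show "(\<Sum>x\<in>S. w x) \<le> w e + opt_val F (w(e := 0))" by simp
qed

lemma measurable_opt_val:
  assumes "finite F" "F \<subseteq> Pow {..<n}" "\<And>j. j < n \<Longrightarrow> (\<lambda>x. g x j) \<in> borel_measurable N"
  shows "(\<lambda>x. opt_val F (g x)) \<in> borel_measurable N"
  unfolding opt_val_def using assms by (intro borel_measurable_Max borel_measurable_sum) auto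

definition single_threshold_value :: "nat \<Rightarrow> real \<Rightarrow> (nat \<Rightarrow> real) \<Rightarrow> real" where
  "single_threshold_value n \<tau> w =
     (if \<exists>e<n. \<tau> \<le> w e then w (LEAST e. e < n \<and> \<tau> \<le> w e) else 0)"

lemma alg1_value_eq_single_threshold_value:
  "W \<le> c * \<tau> \<Longrightarrow> alg1_value n c \<tau> W roe w = single_threshold_value n \<tau> w"
  by (simp add: alg1_value_def single_threshold_value_def)

definition others_below :: "nat \<Rightarrow> real \<Rightarrow> nat \<Rightarrow> (nat \<Rightarrow> real) set" where
  "others_below n \<tau> e = (\<Pi>\<^sub>E j\<in>{..<n}. if j = e then UNIV else {..<\<tau>})"

lemma others_below_less: "w \<in> others_below n \<tau> e \<Longrightarrow> j < n \<Longrightarrow> j \<noteq> e \<Longrightarrow> w j < \<tau>"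
  unfolding others_below_def by (drule PiE_mem[of _ _ _ j]) auto

lemma others_below_fun_upd: "e < n \<Longrightarrow> w(e := y) \<in> others_below n \<tau> e \<longleftrightarrow> w \<in> others_below n \<tau> e"
  unfolding others_below_def PiE_iff extensional_def by auto

lemma single_threshold_value_bounds:
  assumes "finite F" "{} \<in> F" "\<And>e. e < n \<Longrightarrow> {e} \<in> F" "0 \<le> \<tau>"
  shows "0 \<le> single_threshold_value n \<tau> w" "single_threshold_value n \<tau> w \<le> opt_val F w"
proof -
  have "0 \<le> single_threshold_value n \<tau> w \<and> single_threshold_value n \<tau> w \<le> opt_val F w"
  proof (cases "\<exists>e<n. \<tau> \<le> w e")
    case True
    define l where "l = (LEAST e. e < n \<and> \<tau> \<le> w e)"
    have l: "l < n" "\<tau> \<le> w l" using LeastI_ex[OF True[unfolded Bex_def]] by (simp_all add: l_def)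
    have "w l \<le> opt_val F w" using opt_val_ge[OF assms(1) assms(3)[OF l(1)], of w] by simp
    then show ?thesis using True l assms(4) by (simp add: single_threshold_value_def l_def)
  qed (use opt_val_nonneg[OF assms(1,2)] in \<open>auto simp: single_threshold_value_def\<close>)
  then show "0 \<le> single_threshold_value n \<tau> w" "single_threshold_value n \<tau> w \<le> opt_val F w"
    by simp_all
qed

lemma single_threshold_value_unique_exceedance:
  assumes "e < n" "\<tau> < w e" "w \<in> others_below n \<tau> e"
  shows "single_threshold_value n \<tau> w = w e"
proof -
  have "(LEAST j. j < n \<and> \<tau> \<le> w j) = e"
    using assms others_below_less[OF assms(3)] by (intro Least_equality) (auto simp: not_le[symmetric])
  then show ?thesis using assms(1,2) by (auto simp: single_threshold_value_def)
qed

lemma inverse_shift_le_ratio_unique_exceedance: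
  assumes F: "finite F" "\<forall>S\<in>F. finite S" "downward_closed F" "{} \<in> F" "\<And>e. e < n \<Longrightarrow> {e} \<in> F"
    and \<tau>: "0 < \<tau>" and e: "e < n" "\<tau> < w e" "w \<in> others_below n \<tau> e"
  shows "\<tau> / (\<tau> + opt_val F (w(e := 0))) \<le> single_threshold_value n \<tau> w / opt_val F w"
proof -
  define X where "X = opt_val F (w(e := 0))"
  have X: "0 \<le> X" unfolding X_def using opt_val_nonneg[OF F(1,4)] .
  have opt_lower: "w e \<le> opt_val F w" using opt_val_ge[OF F(1) F(5)[OF e(1)], of w] by simp
  have opt_upper: "opt_val F w \<le> w e + X"
    unfolding X_def using F \<tau> e by (intro opt_val_le_add_fun_upd_zero) auto
  have "\<tau> / (\<tau> + X) \<le> w e / (w e + X)"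
    using \<tau> e(2) X by (simp add: divide_simps) (simp add: algebra_simps mult_left_mono)
  also have "\<dots> \<le> w e / opt_val F w"
    using \<tau> e(2) opt_lower opt_upper by (intro divide_left_mono) auto
  finally show ?thesis unfolding X_def single_threshold_value_unique_exceedance[OF e] .
qed

lemma sum_exceedance_le_ratio:
  assumes F: "finite F" "\<forall>S\<in>F. finite S" "downward_closed F" "{} \<in> F" "\<And>e. e < n \<Longrightarrow> {e} \<in> F"
    and \<tau>: "0 < \<tau>"
  shows "(\<Sum>e<n. indicator {\<tau><..} (w e)
              * (indicator (others_below n \<tau> e) w * (\<tau> / (\<tau> + opt_val F (w(e := 0))))))
         \<le> single_threshold_value n \<tau> w / opt_val F w"
    (is "(\<Sum>e<n. ?t e) \<le> ?ratio")
proof (cases "\<exists>e<n. \<tau> < w e \<and> w \<in> others_below n \<tau> e")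
  case True
  then obtain e where e: "e < n" "\<tau> < w e" "w \<in> others_below n \<tau> e" by blast
  have "w \<notin> others_below n \<tau> j" if "j < n" "j \<noteq> e" for j
    using that e(1,2) others_below_less[of w n \<tau> j e] by force
  then have "(\<Sum>j\<in>{..<n} - {e}. ?t j) = 0"
    by (intro sum.neutral) simp
  then have "(\<Sum>e<n. ?t e) = ?t e"
    using sum.remove[of "{..<n}" e ?t] e(1) by simp
  also have "\<dots> \<le> ?ratio"
    using inverse_shift_le_ratio_unique_exceedance[OF F \<tau> e] e by simp
  finally show ?thesis .
next
  case False
  then have "(\<Sum>e<n. ?t e) = 0"
    by (intro sum.neutral) (auto simp: indicator_def)
  also have "0 \<le> ?ratio"
    using single_threshold_value_bounds[OF F(1,4,5)] \<tau> opt_val_nonneg[OF F(1,4)] by simp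
  finally show ?thesis .
qed

locale threshold_setting = finite_product_prob_space M "{..<n}"
  for M :: "nat \<Rightarrow> real measure" and n :: nat +
  fixes F :: "nat set set" and \<tau> :: real
  assumes sets_M: "\<And>i. sets (M i) = sets borel"
    and F_sub: "F \<subseteq> Pow {..<n}" and F_down: "downward_closed F"
    and F_single: "\<And>e. e < n \<Longrightarrow> {e} \<in> F" and F_empty: "{} \<in> F"
    and tau_pos: "0 < \<tau>"
    and no_atom_tau: "\<And>e. e < n \<Longrightarrow> measure (M e) {\<tau>} = 0"
    and below_pos: "\<And>e. e < n \<Longrightarrow> 0 < measure (M e) {..\<tau>}"
begin

definition prob_below :: "nat \<Rightarrow> real" where
  "prob_below e = measure (M e) {..\<tau>}"

definition prob_others_below :: "nat \<Rightarrow> real" where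
  "prob_others_below e = (\<Prod>j\<in>{..<n} - {e}. prob_below j)"

lemma prod_prob_below_eq: "e < n \<Longrightarrow> (\<Prod>j<n. prob_below j) = prob_below e * prob_others_below e"
  unfolding prob_others_below_def by (simp add: prod.remove)

lemma space_M: "space (M i) = UNIV"
  using sets_eq_imp_space_eq[OF sets_M] by simp

lemma finite_F: "finite F" "\<forall>S\<in>F. finite S"
  using F_sub by (auto intro: finite_subset)

lemma opt_val_nonneg': "0 \<le> opt_val F w"
  using opt_val_nonneg[OF finite_F(1) F_empty] .

lemma measurable_component [measurable]: "j < n \<Longrightarrow> (\<lambda>w. w j) \<in> borel_measurable (PiM {..<n} M)"
  using measurable_component_singleton[of j "{..<n}" M] by (simp add: measurable_cong_sets[OF refl sets_M])

lemma measurable_opt_val_fun_upd [measurable]: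
  "(\<lambda>w. opt_val F (w(e := y))) \<in> borel_measurable (PiM {..<n} M)"
  by (rule measurable_opt_val[OF finite_F(1) F_sub]) (simp add: fun_upd_def)

lemma borel_measurable_opt_val [measurable]: "opt_val F \<in> borel_measurable (PiM {..<n} M)"
  using measurable_opt_val[OF finite_F(1) F_sub, of "\<lambda>w. w"] by simp

lemma others_below_event [measurable]: "others_below n \<tau> e \<in> events"
  unfolding others_below_def by (rule sets_PiM_I_finite) (auto simp: sets_M)

lemma measurable_single_threshold_value [measurable]:
  "single_threshold_value n \<tau> \<in> borel_measurable (PiM {..<n} M)"
proof -
  \<comment> \<open>coordinates \<open>e \<ge> n\<close> are not measurable on the product, so they are cut off before
      composing with the countably-valued index of the first exceedance\<close>
  define w' where "w' e w = (if e < n then w e else 0)" for e and w :: "nat \<Rightarrow> real"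
  have "(\<lambda>w. e < n \<and> \<tau> \<le> w e) \<in> measurable (PiM {..<n} M) (count_space UNIV)" for e
    by (cases "e < n") simp_all
  then have first: "(\<lambda>w. LEAST e. e < n \<and> \<tau> \<le> w e) \<in> measurable (PiM {..<n} M) (count_space UNIV)"
    by (rule measurable_Least)
  have "(\<lambda>w. w' e w) \<in> borel_measurable (PiM {..<n} M)" for e
    by (cases "e < n") (simp_all add: w'_def)
  then have "(\<lambda>w. w' (LEAST e. e < n \<and> \<tau> \<le> w e) w) \<in> borel_measurable (PiM {..<n} M)"
    by (rule measurable_compose_countable'[OF _ first]) simp_all
  moreover have "single_threshold_value n \<tau>
      = (\<lambda>w. if \<exists>e\<in>{..<n}. \<tau> \<le> w e then w' (LEAST e. e < n \<and> \<tau> \<le> w e) w else 0)"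
    using LeastI_ex[of "\<lambda>e. e < n \<and> \<tau> \<le> _ e"]
    by (auto simp: fun_eq_iff single_threshold_value_def w'_def)
  ultimately show ?thesis
    by (auto intro!: measurable_If)
qed

lemma prob_others_below_eq: "e < n \<Longrightarrow> prob (others_below n \<tau> e) = prob_others_below e"
proof -
  assume e: "e < n"
  have less_eq: "measure (M j) {..<\<tau>} = prob_below j" if "j < n" for j
  proof -
    have "prob_below j = measure (M j) ({..<\<tau>} \<union> {\<tau>})"
      unfolding prob_below_def by (intro arg_cong[where f = "measure (M j)"]) auto
    also have "\<dots> = measure (M j) {..<\<tau>} + measure (M j) {\<tau>}"
      by (rule M.finite_measure_Union) (auto simp: sets_M)
    finally show ?thesis using no_atom_tau[OF that] by simp
  qed
  have "prob (others_below n \<tau> e) = (\<Prod>j<n. measure (M j) (if j = e then UNIV else {..<\<tau>}))"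
    unfolding others_below_def by (rule prob_times) (simp add: sets_M)
  also have "\<dots> = (\<Prod>j\<in>{..<n} - {e}. prob_below j)"
    using e less_eq by (simp add: prod.remove M.prob_space[unfolded space_M])
  finally show ?thesis unfolding prob_others_below_def .
qed

lemma opt_val_fun_upd_zero_others_below:
  assumes "w \<in> others_below n \<tau> e"
  shows "opt_val F (w(e := 0)) \<le> n * \<tau>"
proof (rule opt_val_le_of_bounded[OF F_sub])
  show "(w(e := 0)) j \<le> \<tau>" if "j < n" for j
    using others_below_less[OF assms that] tau_pos by (cases "j = e") auto
qed (use F_empty tau_pos in auto)

lemma integrable_others_below_opt_val:
  "integrable (PiM {..<n} M) (\<lambda>w. indicator (others_below n \<tau> e) w * opt_val F (w(e := 0)))"
proof (intro integrable_const_bound[where B = "n * \<tau>"] AE_I2)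
  fix w
  show "norm (indicator (others_below n \<tau> e) w * opt_val F (w(e := 0))) \<le> n * \<tau>"
    using opt_val_fun_upd_zero_others_below[of w e] opt_val_nonneg' tau_pos
    by (auto simp: indicator_def)
qed measurable

lemma integrable_all_below_opt_val:
  "integrable (PiM {..<n} M) (\<lambda>w. indicator (\<Pi>\<^sub>E j\<in>{..<n}. {..\<tau>}) w * opt_val F w)"
proof (intro integrable_const_bound[where B = "n * \<tau>"] AE_I2)
  fix w
  show "norm (indicator (\<Pi>\<^sub>E j\<in>{..<n}. {..\<tau>}) w * opt_val F w) \<le> n * \<tau>"
    using opt_val_le_of_bounded[OF F_sub, of w \<tau>] F_empty opt_val_nonneg' tau_pos
    by (auto simp: indicator_def PiE_iff)
  show "(\<lambda>w. indicator (\<Pi>\<^sub>E j\<in>{..<n}. {..\<tau>}) w * opt_val F w) \<in> borel_measurable (PiM {..<n} M)"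
    by (intro borel_measurable_times borel_measurable_indicator borel_measurable_opt_val)
      (rule sets_PiM_I_finite, auto simp: sets_M)
qed

lemma integral_others_below_opt_val_le:
  assumes e: "e < n"
    and opt_E0: "(\<integral>w. indicator (\<Pi>\<^sub>E j\<in>{..<n}. {..\<tau>}) w * opt_val F w \<partial>PiM {..<n} M)
                   \<le> m * (\<Prod>j<n. prob_below j)"
  shows "(\<integral>w. indicator (others_below n \<tau> e) w * opt_val F (w(e := 0)) \<partial>PiM {..<n} M)
           \<le> m * prob_others_below e"
proof -
  let ?E0 = "\<Pi>\<^sub>E j\<in>{..<n}. {..\<tau>}"
  let ?K = "\<lambda>w. indicator (others_below n \<tau> e) w * opt_val F (w(e := 0))"
  have K_indep: "?K (w(e := y)) = ?K w" for w y
    by (simp add: indicator_def others_below_fun_upd[OF e])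
  have "prob_below e * (\<integral>w. ?K w \<partial>PiM {..<n} M) = (\<integral>w. indicator {..\<tau>} (w e) * ?K w \<partial>PiM {..<n} M)"
    unfolding prob_below_def using e
    by (intro integral_indicator_component_mult[symmetric] integrable_others_below_opt_val K_indep)
      (auto simp: sets_M)
  also have "\<dots> \<le> (\<integral>w. indicator ?E0 w * opt_val F w \<partial>PiM {..<n} M)"
  proof (rule integral_mono)
    show "integrable (PiM {..<n} M) (\<lambda>w. indicator {..\<tau>} (w e) * ?K w)"
    proof (rule Bochner_Integration.integrable_bound[OF integrable_others_below_opt_val])
      show "(\<lambda>w. indicator {..\<tau>} (w e) * ?K w) \<in> borel_measurable (PiM {..<n} M)"
        using e by measurable
    qed (auto simp: indicator_def)
    fix w assume w: "w \<in> space (PiM {..<n} M)"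
    show "indicator {..\<tau>} (w e) * ?K w \<le> indicator ?E0 w * opt_val F w"
    proof (cases "w e \<le> \<tau> \<and> w \<in> others_below n \<tau> e")
      case True
      then have "w \<in> ?E0"
        using w others_below_less[of w n \<tau> e] by (force simp: space_PiM PiE_iff)
      then show ?thesis
        using True opt_val_fun_upd_zero_le[OF finite_F(1) _ F_down finite_F(2)] F_empty by auto
    qed (use opt_val_nonneg' in \<open>auto simp: indicator_def\<close>)
  qed (rule integrable_all_below_opt_val)
  also have "\<dots> \<le> prob_below e * (m * prob_others_below e)"
    using opt_E0 prod_prob_below_eq[OF e] by (simp add: algebra_simps)
  finally show ?thesis
    using below_pos[OF e] by (simp add: prob_below_def)
qed

lemma integral_exceedance_ge:
  assumes e: "e < n" and c: "0 \<le> c"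
    and opt_E0: "(\<integral>w. indicator (\<Pi>\<^sub>E j\<in>{..<n}. {..\<tau>}) w * opt_val F w \<partial>PiM {..<n} M)
                   \<le> c * \<tau> * (\<Prod>j<n. prob_below j)"
  shows "(1 - prob_below e) * prob_others_below e / (1 + c)
           \<le> (\<integral>w. indicator {\<tau><..} (w e)
                  * (indicator (others_below n \<tau> e) w * (\<tau> / (\<tau> + opt_val F (w(e := 0))))) \<partial>PiM {..<n} M)"
proof -
  let ?H = "\<lambda>w. indicator (others_below n \<tau> e) w * (\<tau> / (\<tau> + opt_val F (w(e := 0))))"
  have H_int: "integrable (PiM {..<n} M) ?H"
  proof (intro integrable_const_bound[where B = 1] AE_I2)
    fix w show "norm (?H w) \<le> 1"
      using opt_val_nonneg'[of "w(e := 0)"] tau_pos by (simp add: indicator_def)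
  qed measurable
  have H_indep: "?H (w(e := y)) = ?H w" for w y
    by (simp add: indicator_def others_below_fun_upd[OF e])
  have exceed: "measure (M e) {\<tau><..} = 1 - prob_below e"
    using M.prob_compl[of "{..\<tau>}" e] by (simp add: prob_below_def sets_M space_M Compl_eq_Diff_UNIV[symmetric])
  have "prob_others_below e / (1 + c) = prob (others_below n \<tau> e) * (\<tau> / (\<tau> + c * \<tau>))"
  proof -
    have "\<tau> + c * \<tau> = \<tau> * (1 + c)" by (simp add: algebra_simps)
    then show ?thesis using prob_others_below_eq[OF e] tau_pos by simp
  qed
  also have "\<dots> \<le> (\<integral>w. ?H w \<partial>PiM {..<n} M)"
    using prob_others_below_eq[OF e] integral_others_below_opt_val_le[OF e opt_E0] tau_pos c
    by (intro prob_mult_inverse_shift_le_integral integrable_others_below_opt_val opt_val_nonneg')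
      (auto simp: algebra_simps)
  finally have "(1 - prob_below e) * (prob_others_below e / (1 + c))
                  \<le> (1 - prob_below e) * (\<integral>w. ?H w \<partial>PiM {..<n} M)"
    using M.prob_le_1[of e "{..\<tau>}"] by (intro mult_left_mono) (auto simp: prob_below_def)
  also have "\<dots> = (\<integral>w. indicator {\<tau><..} (w e) * ?H w \<partial>PiM {..<n} M)"
    unfolding exceed[symmetric] using e
    by (intro integral_indicator_component_mult[symmetric] H_int H_indep) (auto simp: sets_M)
  finally show ?thesis by simp
qed

lemma integrable_single_threshold_ratio:
  "integrable (PiM {..<n} M) (\<lambda>w. single_threshold_value n \<tau> w / opt_val F w)"
proof (intro integrable_const_bound[where B = 1] AE_I2)
  fix w show "norm (single_threshold_value n \<tau> w / opt_val F w) \<le> 1"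
    using single_threshold_value_bounds[where n = n and w = w,
        OF finite_F(1) F_empty F_single less_imp_le[OF tau_pos]] opt_val_nonneg'[of w]
    by (auto simp: abs_le_iff divide_le_eq_1)
qed measurable

lemma prod_ln_le_sum_exceedance:
  assumes c: "0 \<le> c"
  shows "(\<Prod>j<n. prob_below j) * ln (1 / (\<Prod>j<n. prob_below j)) / (c + 1)
           \<le> (\<Sum>e<n. (1 - prob_below e) * prob_others_below e / (1 + c))"
proof -
  let ?\<gamma> = "\<Prod>j<n. prob_below j"
  have "ln (1 / ?\<gamma>) \<le> (\<Sum>e<n. (1 - prob_below e) / prob_below e)"
    using below_pos by (intro ln_inverse_prod_le_sum) (auto simp: prob_below_def)
  then have "?\<gamma> * ln (1 / ?\<gamma>) \<le> ?\<gamma> * (\<Sum>e<n. (1 - prob_below e) / prob_below e)"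
    by (rule mult_left_mono) (simp add: prob_below_def prod_nonneg)
  then have "?\<gamma> * ln (1 / ?\<gamma>) / (c + 1) \<le> ?\<gamma> / (1 + c) * (\<Sum>e<n. (1 - prob_below e) / prob_below e)"
    using c by (simp add: divide_right_mono add.commute)
  also have "\<dots> = (\<Sum>e<n. (1 - prob_below e) * prob_others_below e / (1 + c))"
    unfolding sum_distrib_left
  proof (rule sum.cong[OF refl])
    fix e assume "e \<in> {..<n}"
    then have "0 < prob_below e" "?\<gamma> = prob_below e * prob_others_below e"
      using below_pos prod_prob_below_eq by (auto simp: prob_below_def)
    then show "?\<gamma> / (1 + c) * ((1 - prob_below e) / prob_below e)
                 = (1 - prob_below e) * prob_others_below e / (1 + c)"
      by simp
  qed
  finally show ?thesis .
qed

lemma integral_ratio_ge: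
  assumes c: "0 \<le> c"
    and opt_E0: "(\<integral>w. indicator (\<Pi>\<^sub>E j\<in>{..<n}. {..\<tau>}) w * opt_val F w \<partial>PiM {..<n} M)
                   \<le> c * \<tau> * (\<Prod>j<n. prob_below j)"
  shows "(\<Prod>j<n. prob_below j) * ln (1 / (\<Prod>j<n. prob_below j)) / (c + 1)
           \<le> (\<integral>w. single_threshold_value n \<tau> w / opt_val F w \<partial>PiM {..<n} M)"
proof -
  let ?t = "\<lambda>e w. indicator {\<tau><..} (w e)
                  * (indicator (others_below n \<tau> e) w * (\<tau> / (\<tau> + opt_val F (w(e := 0)))))"
  have t_int: "integrable (PiM {..<n} M) (?t e)" if "e < n" for e
  proof (intro integrable_const_bound[where B = 1] AE_I2)
    fix w show "norm (?t e w) \<le> 1"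
      using opt_val_nonneg'[of "w(e := 0)"] tau_pos by (simp add: indicator_def)
  qed (use that in measurable)
  have "(\<Prod>j<n. prob_below j) * ln (1 / (\<Prod>j<n. prob_below j)) / (c + 1)
          \<le> (\<Sum>e<n. (1 - prob_below e) * prob_others_below e / (1 + c))"
    by (rule prod_ln_le_sum_exceedance[OF c])
  also have "\<dots> \<le> (\<Sum>e<n. \<integral>w. ?t e w \<partial>PiM {..<n} M)"
    by (intro sum_mono integral_exceedance_ge c opt_E0) simp
  also have "\<dots> = (\<integral>w. (\<Sum>e<n. ?t e w) \<partial>PiM {..<n} M)"
    using t_int by (intro Bochner_Integration.integral_sum[symmetric]) simp
  also have "\<dots> \<le> (\<integral>w. single_threshold_value n \<tau> w / opt_val F w \<partial>PiM {..<n} M)"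
    using t_int integrable_single_threshold_ratio finite_F F_down F_empty F_single tau_pos
    by (intro integral_mono sum_exceedance_le_ratio Bochner_Integration.integrable_sum) auto
  finally show ?thesis .
qed

end

lemma threshold_pos_of_nonneg_no_atom:
  fixes N :: "real measure"
  assumes N: "prob_space N" "sets N = sets borel" and nonneg: "AE x in N. 0 \<le> x"
    and no_atom: "emeasure N {0} = 0" and pos: "0 < measure N {..\<tau>}"
  shows "0 < \<tau>"
proof (rule ccontr)
  assume "\<not> 0 < \<tau>"
  interpret N: prob_space N by (rule N(1))
  have "AE x in N. x \<noteq> 0"
    using N(2) no_atom by (intro AE_I'[of "{0}"]) auto
  with nonneg have "AE x in N. x \<notin> {..\<tau>}"
    by eventually_elim (use \<open>\<not> 0 < \<tau>\<close> in auto)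
  then have "measure N {..\<tau>} = 0"
    using N(2) by (subst N.prob_eq_0) auto
  with pos show False by simp
qed

text \<open>\<^locale>\<open>product_prob_space\<close> needs a probability measure at every index; the indices outside
  \<open>{..<n}\<close> get a point mass, which does not change the product over \<open>{..<n}\<close>.\<close>

definition pad_distr :: "nat \<Rightarrow> (nat \<Rightarrow> real measure) \<Rightarrow> nat \<Rightarrow> real measure" where
  "pad_distr n D e = (if e < n then D e else return borel 0)"

lemma weight_measure_pad_distr: "weight_measure n D = PiM {..<n} (pad_distr n D)"
  unfolding weight_measure_def pad_distr_def by (intro PiM_cong) auto

lemma sets_pad_distr: "\<forall>e<n. sets (D e) = sets borel \<Longrightarrow> sets (pad_distr n D e) = sets borel"
  by (simp add: pad_distr_def)

lemma finite_product_prob_space_pad_distr: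
  assumes "\<forall>e<n. prob_space (D e)"
  shows "finite_product_prob_space (pad_distr n D) {..<n}"
proof -
  have "prob_space (pad_distr n D e)" for e
    using assms by (auto simp: pad_distr_def intro: prob_space_return)
  then show ?thesis
    by (simp add: finite_product_prob_space_def finite_product_sigma_finite_def product_prob_space_def
        product_prob_space_axioms_def product_sigma_finite_def prob_space_imp_sigma_finite
        finite_product_sigma_finite_axioms_def)
qed

lemma event0_eq_PiE:
  assumes "\<forall>e<n. sets (D e) = sets borel"
  shows "event0 n D \<tau> = (\<Pi>\<^sub>E e\<in>{..<n}. {..\<tau>})"
proof -
  have "space (pad_distr n D e) = UNIV" for e
    using sets_eq_imp_space_eq[OF sets_pad_distr[OF assms]] by simp
  then show ?thesis
    unfolding event0_def weight_measure_pad_distr by (auto simp: space_PiM PiE_iff extensional_def)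
qed

lemma cond_opt_mult_measure:
  "measure (weight_measure n D) (event0 n D \<tau>) \<noteq> 0 \<Longrightarrow>
     cond_opt n F D \<tau> * measure (weight_measure n D) (event0 n D \<tau>)
       = (\<integral>w. indicator (event0 n D \<tau>) w * opt_val F w \<partial>weight_measure n D)"
  by (simp add: cond_opt_def set_lebesgue_integral_def)

lemma cond_opt_nonneg: "finite F \<Longrightarrow> {} \<in> F \<Longrightarrow> 0 \<le> cond_opt n F D \<tau>"
  unfolding cond_opt_def set_lebesgue_integral_def
  by (intro divide_nonneg_nonneg integral_nonneg) (auto simp: opt_val_nonneg)

lemma measure_event0:
  assumes "\<forall>e<n. prob_space (D e)" "\<forall>e<n. sets (D e) = sets borel"
  shows "measure (weight_measure n D) (event0 n D \<tau>) = (\<Prod>e<n. measure (D e) {..\<tau>})"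
proof -
  interpret finite_product_prob_space "pad_distr n D" "{..<n}"
    using assms(1) by (rule finite_product_prob_space_pad_distr)
  have "measure (weight_measure n D) (event0 n D \<tau>) = (\<Prod>e<n. measure (pad_distr n D e) {..\<tau>})"
    unfolding weight_measure_pad_distr event0_eq_PiE[OF assms(2)]
    by (rule prob_times) (simp add: sets_pad_distr[OF assms(2)])
  also have "\<dots> = (\<Prod>e<n. measure (D e) {..\<tau>})"
    by (intro prod.cong) (auto simp: pad_distr_def)
  finally show ?thesis .
qed

lemma integral_event0_opt_val_le:
  assumes "\<forall>e<n. sets (D e) = sets borel" "measure (weight_measure n D) (event0 n D \<tau>) = \<gamma>"
    and "0 < \<gamma>" "cond_opt n F D \<tau> \<le> b"
  shows "(\<integral>w. indicator (\<Pi>\<^sub>E e\<in>{..<n}. {..\<tau>}) w * opt_val F w \<partial>PiM {..<n} (pad_distr n D)) \<le> b * \<gamma>"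
proof -
  have "(\<integral>w. indicator (event0 n D \<tau>) w * opt_val F w \<partial>weight_measure n D) = cond_opt n F D \<tau> * \<gamma>"
    using cond_opt_mult_measure[of n D \<tau> F] assms(2,3) by simp
  also have "\<dots> \<le> b * \<gamma>"
    using assms(3,4) by (simp add: mult_right_mono)
  finally show ?thesis
    by (simp add: event0_eq_PiE[OF assms(1)] weight_measure_pad_distr)
qed

lemma threshold_setting_pad_distr:
  assumes F_sub: "F \<subseteq> Pow {..<n}" and F_down: "downward_closed F" and F_single: "\<forall>e<n. {e} \<in> F"
    and D_prob: "\<forall>e<n. prob_space (D e)" and D_borel: "\<forall>e<n. sets (D e) = sets borel"
    and D_nonneg: "\<forall>e<n. AE x in D e. 0 \<le> x" and D_noatom: "\<forall>e<n. \<forall>x. emeasure (D e) {x} = 0"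
    and gamma: "0 < measure (weight_measure n D) (event0 n D \<tau>)"
      "measure (weight_measure n D) (event0 n D \<tau>) < 1"
  shows "threshold_setting (pad_distr n D) n F \<tau>"
proof -
  note gamma_prod = measure_event0[OF D_prob D_borel]
  have n: "0 < n"
    using gamma(2)[unfolded gamma_prod] by (cases n) auto
  have below_pos: "\<forall>e<n. 0 < measure (D e) {..\<tau>}"
    using gamma(1)[unfolded gamma_prod] by (auto intro: prod_pos_imp_factor_pos[of "{..<n}"])
  have tau_pos: "0 < \<tau>"
    by (rule threshold_pos_of_nonneg_no_atom[of "D 0"])
      (use n D_prob D_borel D_nonneg D_noatom below_pos in simp_all)
  have F_empty: "{} \<in> F"
    using downward_closed_Diff[OF F_down, of "{0}" "{0}"] F_single n by simp
  show ?thesis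
    using F_sub F_down F_single F_empty D_borel D_noatom tau_pos below_pos
      finite_product_prob_space_pad_distr[OF D_prob]
    by (simp add: threshold_setting_def threshold_setting_axioms_def sets_pad_distr measure_def)
      (simp add: pad_distr_def)
qed

theorem lemma1:
  fixes n :: nat and F :: "nat set set" and D :: "nat \<Rightarrow> real measure"
    and \<alpha> \<gamma> \<delta> k c \<tau> :: real
    and roe :: "nat \<Rightarrow> (nat \<Rightarrow> real) \<Rightarrow> bool"
  assumes F_sub: "F \<subseteq> Pow {..<n}"
    and F_down: "downward_closed F"
    and F_single: "\<forall>e<n. {e} \<in> F"
    and D_prob: "\<forall>e<n. prob_space (D e)"
    and D_borel: "\<forall>e<n. sets (D e) = sets borel"
    and D_nonneg: "\<forall>e<n. AE x in D e. 0 \<le> x"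
    and D_noatom: "\<forall>e<n. \<forall>x. emeasure (D e) {x} = 0"
    and alpha: "0 < \<alpha>" "\<alpha> \<le> 1"
    and gamma: "0 < \<gamma>" "\<gamma> < 1"
    and delta: "\<delta> > 1"
    and k: "k \<ge> 1"
    and c: "c \<ge> (4 + 2 * \<delta>) / (3 * (\<delta> - 1)^2) * ln (k / \<alpha>)"
    and tau: "measure (weight_measure n D) (event0 n D \<tau>) = \<gamma>"
    and W_small: "cond_opt n F D \<tau> \<le> c * \<tau>"
  shows "(\<integral>w. alg1_value n c \<tau> (cond_opt n F D \<tau>) roe w / opt_val F w \<partial>weight_measure n D)
           \<ge> \<gamma> * ln (1 / \<gamma>) / (c + 1)"
proof -
  \<comment> \<open>The hypotheses on \<open>\<alpha>\<close>, \<open>\<delta>\<close>, \<open>k\<close> and the lower bound on \<open>c\<close> only matter for \<open>W > c\<tau>\<close>;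
      here \<open>c \<ge> 0\<close> already follows from \<open>0 \<le> W \<le> c\<tau>\<close>.\<close>
  interpret S: threshold_setting "pad_distr n D" n F \<tau>
    using threshold_setting_pad_distr[OF F_sub F_down F_single D_prob D_borel D_nonneg D_noatom] tau gamma
    by simp
  have prod_below: "(\<Prod>e<n. S.prob_below e) = \<gamma>"
    unfolding S.prob_below_def tau[symmetric] measure_event0[OF D_prob D_borel]
    by (intro prod.cong) (auto simp: pad_distr_def)
  have "0 \<le> c * \<tau>"
    using W_small cond_opt_nonneg[OF S.finite_F(1) S.F_empty, of n D \<tau>] by linarith
  then have c_nonneg: "0 \<le> c"
    using S.tau_pos by (simp add: zero_le_mult_iff)
  have opt_E0: "(\<integral>w. indicator (\<Pi>\<^sub>E e\<in>{..<n}. {..\<tau>}) w * opt_val F w \<partial>PiM {..<n} (pad_distr n D))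
                 \<le> c * \<tau> * (\<Prod>e<n. S.prob_below e)"
    using integral_event0_opt_val_le[OF D_borel tau gamma(1) W_small] by (simp add: prod_below)
  from S.integral_ratio_ge[OF c_nonneg opt_E0] show ?thesis
    using W_small by (simp add: prod_below weight_measure_pad_distr alg1_value_eq_single_threshold_value)
qed

end
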